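(* Let $C=\mathbb{S}^1\times\mathbb{R}$ be the flat Euclidean cylinder, $\theta_0\in\mathbb{S}^1$, $v=\{\theta_0\}\times\mathbb{R}$, and let $f:C\to C$ be a geodesic-preserving bijection with $f(v)=v$, $f(\theta_0,0)=(\theta_0,0)$ and $f(\theta_0,1)=(\theta_0,1)$. Then $f(\theta_0,n/2^m)=(\theta_0,n/2^m)$ for all integers $n$ and $m\geq 0$.
   Context: $C$ carries the product of the flat metric on $\mathbb{S}^1=\mathbb{R}/\mathbb{Z}$ and the standard metric on $\mathbb{R}$. A geodesic is the image of a locally isometric immersion of the whole real line; a bijection (not assumed continuous) is geodesic-preserving if it maps every geodesic onto a geodesic as a set. *)

theory Defs
  imports "HOL-Analysis.Analysis"
begin

text \<open>The flat cylinder C = S^1 x R with S^1 = R/Z, modelled on the fundamental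
domain [0,1) x R.  A point (x,y) with 0 <= x < 1 represents the class of x in R/Z
together with the height y.\<close>

definition cyl :: "(real \<times> real) set" where
  "cyl = {p. 0 \<le> fst p \<and> fst p < 1}"

definition circ_dist :: "real \<Rightarrow> real \<Rightarrow> real" where
  "circ_dist a b = min (frac (a - b)) (1 - frac (a - b))"

definition cyl_dist :: "real \<times> real \<Rightarrow> real \<times> real \<Rightarrow> real" where
  "cyl_dist p q = sqrt ((circ_dist (fst p) (fst q))\<^sup>2 + (snd p - snd q)\<^sup>2)"

definition loc_isom_immersion :: "(real \<Rightarrow> real \<times> real) \<Rightarrow> bool" where
  "loc_isom_immersion \<gamma> \<longleftrightarrow> range \<gamma> \<subseteq> cyl \<and>
     (\<forall>t. \<exists>e>0. \<forall>s\<in>{t-e<..<t+e}. \<forall>s'\<in>{t-e<..<t+e}.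
         cyl_dist (\<gamma> s) (\<gamma> s') = \<bar>s - s'\<bar>)"

definition cyl_geodesic :: "(real \<times> real) set \<Rightarrow> bool" where
  "cyl_geodesic G \<longleftrightarrow> (\<exists>\<gamma>. loc_isom_immersion \<gamma> \<and> G = range \<gamma>)"

definition geodesic_preserving :: "(real \<times> real \<Rightarrow> real \<times> real) \<Rightarrow> bool" where
  "geodesic_preserving f \<longleftrightarrow>
     bij_betw f cyl cyl \<and> (\<forall>G. cyl_geodesic G \<longrightarrow> cyl_geodesic (f ` G))"

end

theory Submission
  imports Defs
begin

text \<open>Every geodesic of the cylinder is a helix \<open>s \<mapsto> (frac (x0 + c s), y0 + d s)\<close> with
  \<open>c\<^sup>2 + d\<^sup>2 = 1\<close>: a local isometry lifts locally to a unit-speed line in the universal cover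
  \<open>\<real>\<^sup>2\<close>, and its velocity is locally, hence globally, constant. A helix meets the vertical
  line \<open>v\<close> in nothing, in all of \<open>v\<close>, or in an arithmetic progression, and every arithmetic
  progression of \<open>v\<close> arises in this way. So the restriction \<open>g\<close> of \<open>f\<close> to \<open>v\<close> is an injection
  of \<open>\<real>\<close> mapping arithmetic progressions onto arithmetic progressions. Such a map is affine on
  every lattice \<open>a\<int>\<close>, because consecutive terms of the progression \<open>g ` a\<int>\<close> come from points
  at distance \<open>\<bar>a\<bar>\<close>. With \<open>g 0 = 0\<close> and \<open>g 1 = 1\<close> this forces \<open>g\<close> to fix every rational,
  in particular every dyadic \<open>n / 2\<^sup>m\<close>.\<close>

lemma circ_dist_le_abs: "circ_dist a b \<le> \<bar>a - b - of_int k\<bar>"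
proof -
  define z where "z = a - b"
  have "frac z = z - of_int \<lfloor>z\<rfloor>" "of_int \<lfloor>z\<rfloor> \<le> z" "z < of_int \<lfloor>z\<rfloor> + 1"
    by (simp add: frac_def) linarith+
  moreover have "k \<le> \<lfloor>z\<rfloor> \<or> k \<ge> \<lfloor>z\<rfloor> + 1" by linarith
  then have "of_int k \<le> (of_int \<lfloor>z\<rfloor>::real) \<or> of_int k \<ge> (of_int \<lfloor>z\<rfloor>::real) + 1"
    by (metis of_int_add of_int_le_iff of_int_1)
  ultimately show ?thesis unfolding circ_dist_def z_def[symmetric] by linarith
qed

lemma circ_dist_attained: "\<exists>k::int. circ_dist a b = \<bar>a - b - of_int k\<bar>"
proof -
  define z where "z = a - b"
  have "0 \<le> frac z" "frac z < 1" by (simp_all add: frac_lt_1)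
  moreover have "frac z = z - of_int \<lfloor>z\<rfloor>" by (simp add: frac_def)
  ultimately have "circ_dist a b = \<bar>a - b - of_int \<lfloor>z\<rfloor>\<bar> \<or> circ_dist a b = \<bar>a - b - of_int (\<lfloor>z\<rfloor> + 1)\<bar>"
    unfolding circ_dist_def z_def[symmetric] by (auto simp: z_def min_def)
  then show ?thesis by blast
qed

lemma circ_dist_eq_abs:
  assumes "\<bar>a - b - of_int k\<bar> \<le> 1/2"
  shows "circ_dist a b = \<bar>a - b - of_int k\<bar>"
proof -
  obtain k' where k': "circ_dist a b = \<bar>a - b - of_int k'\<bar>" using circ_dist_attained by blast
  show ?thesis
  proof (cases "k' = k")
    case False
    then have "\<bar>of_int k - of_int k'\<bar> \<ge> (1::real)"
      using Ints_nonzero_abs_ge1[of "of_int k - of_int k' :: real"] by simp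
    then have "circ_dist a b \<ge> 1/2" using k' assms by linarith
    then show ?thesis using circ_dist_le_abs[of a b k] assms by linarith
  qed (use k' in simp)
qed

lemma circ_dist_le_cyl_dist: "circ_dist (fst p) (fst q) \<le> cyl_dist p q"
  unfolding cyl_dist_def by (rule real_le_rsqrt) simp

lemma frac_eq_frac_iff: "frac x = frac y \<longleftrightarrow> x - y \<in> \<int>"
  using frac_diff_eq frac_diff_zero frac_eq_0_iff by metis

lemma frac_eq_iff_diff_Ints: "0 \<le> \<theta> \<Longrightarrow> \<theta> < 1 \<Longrightarrow> frac z = \<theta> \<longleftrightarrow> z - \<theta> \<in> \<int>"
  using frac_eq_frac_iff[of z \<theta>] frac_eq[of \<theta>] by simp

lemma eq_scaleR_if_norms_collinear:
  fixes u v :: "'a::real_inner"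
  assumes u: "(norm u)\<^sup>2 = x\<^sup>2" and v: "(norm v)\<^sup>2 = h\<^sup>2"
    and uv: "(norm (u - v))\<^sup>2 = (x - h)\<^sup>2" and h: "h \<noteq> 0"
  shows "u = (x / h) *\<^sub>R v"
proof -
  have "(norm (u - v))\<^sup>2 = (norm u)\<^sup>2 - 2 * inner u v + (norm v)\<^sup>2"
    by (simp add: power2_norm_eq_inner inner_diff inner_commute)
  then have inner_uv: "inner u v = x * h"
    using u v uv by (simp add: power2_eq_square algebra_simps)
  have "(norm (u - (x / h) *\<^sub>R v))\<^sup>2 = (norm u)\<^sup>2 - 2 * (x / h) * inner u v + (x / h)\<^sup>2 * (norm v)\<^sup>2"
    unfolding power2_norm_eq_inner
    by (simp add: inner_commute power2_eq_square algebra_simps)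
  also have "\<dots> = 0"
    using h unfolding u v inner_uv by (simp add: power2_eq_square field_simps)
  finally show ?thesis by simp
qed

lemma isometry_on_ball_affine:
  fixes \<phi> :: "real \<Rightarrow> 'a::real_inner"
  assumes e: "e > 0"
    and iso: "\<And>s s'. s \<in> ball t e \<Longrightarrow> s' \<in> ball t e \<Longrightarrow> dist (\<phi> s) (\<phi> s') = dist s s'"
  obtains v where "norm v = 1" "\<And>s. s \<in> ball t e \<Longrightarrow> \<phi> s = \<phi> t + (s - t) *\<^sub>R v"
proof -
  define h where "h = e / 2"
  define w where "w = \<phi> (t + h) - \<phi> t"
  have h: "h > 0" and th: "t + h \<in> ball t e" and t: "t \<in> ball t e"
    using e by (auto simp: h_def dist_real_def)
  have nw: "norm w = h" using iso[OF th t] h by (simp add: w_def dist_norm dist_real_def)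
  have affine: "\<phi> s = \<phi> t + (s - t) *\<^sub>R ((1 / h) *\<^sub>R w)" if s: "s \<in> ball t e" for s
  proof -
    have "\<phi> s - \<phi> t = ((s - t) / h) *\<^sub>R w"
    proof (rule eq_scaleR_if_norms_collinear)
      show "(norm (\<phi> s - \<phi> t))\<^sup>2 = (s - t)\<^sup>2" using iso[OF s t] by (simp add: dist_norm dist_real_def)
      show "(norm w)\<^sup>2 = h\<^sup>2" using nw by simp
      show "(norm (\<phi> s - \<phi> t - w))\<^sup>2 = (s - t - h)\<^sup>2"
        using iso[OF s th] by (simp add: w_def dist_norm dist_real_def algebra_simps)
    qed (use h in simp)
    then show ?thesis by (simp add: algebra_simps)
  qed
  show ?thesis by (rule that[OF _ affine]) (use nw h in simp_all)
qed

section \<open>Geodesics of the cylinder are helices\<close>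

definition helix :: "real \<Rightarrow> real \<Rightarrow> real \<Rightarrow> real \<Rightarrow> real \<Rightarrow> real \<times> real" where
  "helix x0 y0 c d s = (frac (x0 + c * s), y0 + d * s)"

text \<open>On \<open>S\<close> the curve \<open>\<gamma>\<close> lifts to a straight line with velocity \<open>(c, d)\<close> in the universal
  cover \<open>\<real>\<^sup>2\<close>: its first coordinate is only controlled modulo \<open>\<int>\<close>.\<close>
definition helical_on :: "(real \<Rightarrow> real \<times> real) \<Rightarrow> real \<Rightarrow> real \<Rightarrow> real set \<Rightarrow> bool" where
  "helical_on \<gamma> c d S \<longleftrightarrow> (\<forall>s\<in>S. \<forall>s'\<in>S.
     snd (\<gamma> s') - snd (\<gamma> s) = d * (s' - s) \<and> fst (\<gamma> s') - fst (\<gamma> s) - c * (s' - s) \<in> \<int>)"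

lemma helical_on_subset: "helical_on \<gamma> c d S \<Longrightarrow> T \<subseteq> S \<Longrightarrow> helical_on \<gamma> c d T"
  unfolding helical_on_def by blast

lemma loc_isom_immersion_local_lift:
  assumes "loc_isom_immersion \<gamma>"
  obtains e P where "0 < e" "e \<le> 1/8" "\<And>s. fst (\<gamma> s) - P s \<in> \<int>"
    "\<And>s s'. s \<in> ball t e \<Longrightarrow> s' \<in> ball t e \<Longrightarrow>
       dist (P s, snd (\<gamma> s)) (P s', snd (\<gamma> s')) = dist s s'"
proof -
  obtain e0 where e0: "e0 > 0"
    "\<forall>s\<in>{t-e0<..<t+e0}. \<forall>s'\<in>{t-e0<..<t+e0}. cyl_dist (\<gamma> s) (\<gamma> s') = \<bar>s - s'\<bar>"
    using assms unfolding loc_isom_immersion_def by blast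
  define e where "e = min e0 (1/8)"
  have e: "0 < e" "e \<le> 1/8" using e0 by (auto simp: e_def)
  have iso: "cyl_dist (\<gamma> s) (\<gamma> s') = dist s s'" if "s \<in> ball t e" "s' \<in> ball t e" for s s'
    using e0(2) that by (auto simp: e_def dist_real_def abs_less_iff)
  have "\<forall>s. \<exists>k::int. circ_dist (fst (\<gamma> s)) (fst (\<gamma> t)) = \<bar>fst (\<gamma> s) - fst (\<gamma> t) - of_int k\<bar>"
    using circ_dist_attained by blast
  then obtain K where K: "\<And>s. circ_dist (fst (\<gamma> s)) (fst (\<gamma> t)) = \<bar>fst (\<gamma> s) - fst (\<gamma> t) - of_int (K s)\<bar>"
    by metis
  define P where "P s = fst (\<gamma> s) - of_int (K s)" for s
  \<comment> \<open>Lifts within \<open>1/8\<close> of \<open>fst (\<gamma> t)\<close> are within \<open>1/2\<close> of each other, and there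
    \<open>circ_dist\<close> is the plain distance.\<close>
  have near: "\<bar>P s - fst (\<gamma> t)\<bar> < 1/8" if "s \<in> ball t e" for s
  proof -
    have "\<bar>P s - fst (\<gamma> t)\<bar> \<le> cyl_dist (\<gamma> s) (\<gamma> t)"
      using circ_dist_le_cyl_dist[of "\<gamma> s" "\<gamma> t"] K[of s] by (simp add: P_def algebra_simps)
    also have "\<dots> < 1/8" using iso[OF that, of t] that e by (simp add: dist_commute)
    finally show ?thesis .
  qed
  show ?thesis
  proof (rule that[OF e])
    show "fst (\<gamma> s) - P s \<in> \<int>" for s by (simp add: P_def)
    fix s s' assume s: "s \<in> ball t e" and s': "s' \<in> ball t e"
    have "\<bar>fst (\<gamma> s) - fst (\<gamma> s') - of_int (K s - K s')\<bar> \<le> 1/2"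
      using near[OF s] near[OF s'] unfolding P_def by linarith
    from circ_dist_eq_abs[OF this]
    have "circ_dist (fst (\<gamma> s)) (fst (\<gamma> s')) = dist (P s) (P s')"
      by (simp add: P_def dist_real_def algebra_simps)
    then show "dist (P s, snd (\<gamma> s)) (P s', snd (\<gamma> s')) = dist s s'"
      using iso[OF s s'] by (simp add: dist_Pair_Pair cyl_dist_def dist_real_def)
  qed
qed

lemma loc_isom_immersion_locally_helical:
  assumes "loc_isom_immersion \<gamma>"
  shows "\<exists>e>0. e \<le> 1/8 \<and> (\<exists>c d. c\<^sup>2 + d\<^sup>2 = 1 \<and> helical_on \<gamma> c d (ball t e))"
proof -
  obtain e P where e: "0 < e" "e \<le> 1/8" and lift: "\<And>s. fst (\<gamma> s) - P s \<in> \<int>"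
    and iso: "\<And>s s'. s \<in> ball t e \<Longrightarrow> s' \<in> ball t e \<Longrightarrow>
       dist (P s, snd (\<gamma> s)) (P s', snd (\<gamma> s')) = dist s s'"
    using loc_isom_immersion_local_lift[OF assms] by blast
  obtain v where v: "norm v = 1"
    and line: "\<And>s. s \<in> ball t e \<Longrightarrow> (P s, snd (\<gamma> s)) = (P t, snd (\<gamma> t)) + (s - t) *\<^sub>R v"
    using isometry_on_ball_affine[of e t "\<lambda>s. (P s, snd (\<gamma> s))"] e iso by blast
  obtain c d where cd: "v = (c, d)" by (cases v)
  have "helical_on \<gamma> c d (ball t e)"
    unfolding helical_on_def
  proof (intro ballI conjI)
    fix s s' assume s: "s \<in> ball t e" and s': "s' \<in> ball t e"
    show "snd (\<gamma> s') - snd (\<gamma> s) = d * (s' - s)"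
      using line[OF s] line[OF s'] by (simp add: cd algebra_simps)
    have "fst (\<gamma> s') - fst (\<gamma> s) - c * (s' - s) = (fst (\<gamma> s') - P s') - (fst (\<gamma> s) - P s)"
      using line[OF s] line[OF s'] by (simp add: cd algebra_simps)
    then show "fst (\<gamma> s') - fst (\<gamma> s) - c * (s' - s) \<in> \<int>" by (metis Ints_diff lift)
  qed
  moreover have "c\<^sup>2 + d\<^sup>2 = 1" using v by (simp add: cd norm_Pair)
  ultimately show ?thesis using e by blast
qed

lemma helical_on_unique_velocity:
  assumes "helical_on \<gamma> c d S" "helical_on \<gamma> c' d' S" "s \<in> S" "s' \<in> S" "s \<noteq> s'"
    and "\<bar>s' - s\<bar> < 1/2" "\<bar>c\<bar> \<le> 1" "\<bar>c'\<bar> \<le> 1"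
  shows "c = c' \<and> d = d'"
proof
  have "(fst (\<gamma> s') - fst (\<gamma> s) - c' * (s' - s)) - (fst (\<gamma> s') - fst (\<gamma> s) - c * (s' - s)) \<in> \<int>"
    using assms(1-4) unfolding helical_on_def by (blast intro: Ints_diff)
  then have "(c - c') * (s' - s) \<in> \<int>" by (simp add: algebra_simps)
  moreover have "\<bar>(c - c') * (s' - s)\<bar> < 1"
  proof -
    have "\<bar>c - c'\<bar> * \<bar>s' - s\<bar> \<le> 2 * \<bar>s' - s\<bar>" using assms(7,8) by (intro mult_right_mono) auto
    then show ?thesis using assms(6) by (simp add: abs_mult)
  qed
  ultimately show "c = c'" using Ints_nonzero_abs_less1 assms(5) by fastforce
  show "d = d'" using assms(1-5) unfolding helical_on_def by auto
qed

lemma locally_constant_real_eq: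
  fixes F :: "real \<Rightarrow> 'a"
  assumes "\<And>t. \<exists>e>0. \<forall>s\<in>ball t e. F s = F t"
  shows "F s = F t"
proof (rule connected_local_const[OF connected_UNIV UNIV_I UNIV_I], rule ballI)
  fix a :: real
  obtain e where e: "e > 0" "\<forall>s\<in>ball a e. F s = F a" using assms by blast
  show "\<forall>\<^sub>F b in at a within UNIV. F a = F b"
    by (rule eventually_mono[OF eventually_at_ball[OF e(1)]]) (use e(2) in auto)
qed

lemma loc_isom_immersion_uniform_velocity:
  assumes "loc_isom_immersion \<gamma>"
  obtains c d where "c\<^sup>2 + d\<^sup>2 = 1" "\<And>t. \<exists>e>0. helical_on \<gamma> c d (ball t e)"
proof -
  obtain E C D where E: "\<And>t. 0 < E t" "\<And>t. E t \<le> 1/8" and CD: "\<And>t. (C t)\<^sup>2 + (D t)\<^sup>2 = 1"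
    and hel: "\<And>t. helical_on \<gamma> (C t) (D t) (ball t (E t))"
    using loc_isom_immersion_locally_helical[OF assms] by metis
  have C_le: "\<bar>C t\<bar> \<le> 1" for t
  proof -
    have "(C t)\<^sup>2 \<le> 1" using CD[of t] zero_le_power2[of "D t"] by linarith
    then show ?thesis by (simp add: abs_square_le_1)
  qed
  have same: "(C s, D s) = (C t, D t)" if s: "s \<in> ball t (E t)" for s t
  proof -
    define \<epsilon> where "\<epsilon> = min (E t - dist t s) (E s)"
    define s' where "s' = s + \<epsilon> / 2"
    have \<epsilon>: "0 < \<epsilon>" "\<epsilon> \<le> E s" using s E(1)[of s] by (auto simp: \<epsilon>_def)
    let ?S = "ball t (E t) \<inter> ball s (E s)"
    have "dist s s' = \<epsilon> / 2" using \<epsilon> by (simp add: s'_def dist_real_def)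
    moreover have "\<epsilon> \<le> E t - dist t s" by (simp add: \<epsilon>_def)
    ultimately have "s' \<in> ball t (E t)" "s' \<in> ball s (E s)"
      using dist_triangle[of t s' s] \<epsilon> by auto
    then have "s \<in> ?S" "s' \<in> ?S" using s E(1)[of s] by auto
    moreover have "s \<noteq> s'" "\<bar>s' - s\<bar> < 1/2" using \<epsilon> E(2)[of s] by (auto simp: s'_def)
    ultimately have "C s = C t \<and> D s = D t"
      using helical_on_unique_velocity[of \<gamma> "C s" "D s" ?S "C t" "D t"] C_le
        helical_on_subset[OF hel[of s]] helical_on_subset[OF hel[of t]] by blast
    then show ?thesis by simp
  qed
  have "(C t, D t) = (C 0, D 0)" for t
    by (rule locally_constant_real_eq) (use E(1) same in blast)
  then show ?thesis using that[of "C 0" "D 0"] CD hel E(1) by (metis prod.inject)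
qed

lemma loc_isom_immersion_eq_helix:
  assumes "loc_isom_immersion \<gamma>"
  obtains x0 y0 c d where "c\<^sup>2 + d\<^sup>2 = 1" "\<gamma> = helix x0 y0 c d"
proof -
  obtain c d where cd: "c\<^sup>2 + d\<^sup>2 = 1" and hel: "\<And>t. \<exists>e>0. helical_on \<gamma> c d (ball t e)"
    using loc_isom_immersion_uniform_velocity[OF assms] by blast
  define F where "F s = (frac (fst (\<gamma> s) - c * s), snd (\<gamma> s) - d * s)" for s
  have "\<exists>e>0. \<forall>s\<in>ball t e. F s = F t" for t
  proof -
    obtain e where e: "e > 0" "helical_on \<gamma> c d (ball t e)" using hel by blast
    have "F s = F t" if "s \<in> ball t e" for s
    proof -
      have "fst (\<gamma> s) - fst (\<gamma> t) - c * (s - t) \<in> \<int>" "snd (\<gamma> s) - snd (\<gamma> t) = d * (s - t)"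
        using e that unfolding helical_on_def by auto
      then show ?thesis by (simp add: F_def frac_eq_frac_iff algebra_simps)
    qed
    then show ?thesis using e by blast
  qed
  then have F: "F s = F 0" for s by (rule locally_constant_real_eq)
  have "\<gamma> s = helix (fst (\<gamma> 0)) (snd (\<gamma> 0)) c d s" for s
  proof -
    have "0 \<le> fst (\<gamma> s)" "fst (\<gamma> s) < 1"
      using assms unfolding loc_isom_immersion_def cyl_def by auto
    then have "fst (\<gamma> s) = frac (fst (\<gamma> s))" by (simp add: frac_eq)
    also have "\<dots> = frac (fst (\<gamma> 0) + c * s)"
      using F[of s] by (simp add: F_def frac_eq_frac_iff frac_eq algebra_simps)
    finally show ?thesis using F[of s] by (simp add: F_def helix_def prod_eq_iff)
  qed
  then show ?thesis using that cd by blast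
qed

lemma helix_loc_isom_immersion:
  assumes cd: "c\<^sup>2 + d\<^sup>2 = 1"
  shows "loc_isom_immersion (helix x0 y0 c d)"
  unfolding loc_isom_immersion_def
proof (intro conjI allI)
  show "range (helix x0 y0 c d) \<subseteq> cyl" by (auto simp: helix_def cyl_def frac_lt_1)
  have c: "\<bar>c\<bar> \<le> 1" using cd zero_le_power2[of d] abs_square_le_1[of c] by linarith
  fix t :: real
  show "\<exists>e>0. \<forall>s\<in>{t-e<..<t+e}. \<forall>s'\<in>{t-e<..<t+e}.
          cyl_dist (helix x0 y0 c d s) (helix x0 y0 c d s') = \<bar>s - s'\<bar>"
  proof (intro exI[of _ "1/4"] conjI ballI)
    fix s s' assume "s \<in> {t - 1/4<..<t + 1/4}" "s' \<in> {t - 1/4<..<t + 1/4}"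
    then have "\<bar>s - s'\<bar> < 1/2" unfolding greaterThanLessThan_iff abs_less_iff by linarith
    then have "\<bar>c\<bar> * \<bar>s - s'\<bar> \<le> 1 * (1/2)" using c by (intro mult_mono) auto
    then have "\<bar>c * (s - s')\<bar> \<le> 1/2" by (simp add: abs_mult)
    moreover have "frac (x0 + c * s) - frac (x0 + c * s') - of_int (\<lfloor>x0 + c * s'\<rfloor> - \<lfloor>x0 + c * s\<rfloor>)
        = c * (s - s')" by (simp add: frac_def algebra_simps)
    ultimately have "circ_dist (frac (x0 + c * s)) (frac (x0 + c * s')) = \<bar>c * (s - s')\<bar>"
      by (metis circ_dist_eq_abs)
    then have "cyl_dist (helix x0 y0 c d s) (helix x0 y0 c d s') = sqrt ((c\<^sup>2 + d\<^sup>2) * (s - s')\<^sup>2)"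
      by (simp add: cyl_dist_def helix_def power2_eq_square algebra_simps)
    then show "cyl_dist (helix x0 y0 c d s) (helix x0 y0 c d s') = \<bar>s - s'\<bar>" using cd by simp
  qed simp
qed

lemma cyl_geodesic_iff_helix:
  "cyl_geodesic G \<longleftrightarrow> (\<exists>x0 y0 c d. c\<^sup>2 + d\<^sup>2 = 1 \<and> G = range (helix x0 y0 c d))"
  unfolding cyl_geodesic_def
  by (metis helix_loc_isom_immersion loc_isom_immersion_eq_helix)

section \<open>Vertical slices of geodesics\<close>

definition arith_prog :: "real \<Rightarrow> real \<Rightarrow> real set" where
  "arith_prog b r = range (\<lambda>k::int. b + of_int k * r)"

lemma mem_arith_prog: "x \<in> arith_prog b r \<longleftrightarrow> (\<exists>k::int. x = b + of_int k * r)"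
  by (auto simp: arith_prog_def)

lemma arith_prog_subset:
  assumes "b + of_int j * r \<in> arith_prog b' r'" "b + of_int (j + 1) * r \<in> arith_prog b' r'"
  shows "arith_prog b r \<subseteq> arith_prog b' r'"
proof
  obtain k1 k2 :: int where k1: "b + of_int j * r = b' + of_int k1 * r'"
    and k2: "b + of_int (j + 1) * r = b' + of_int k2 * r'"
    using assms by (auto simp: mem_arith_prog)
  have r: "r = of_int (k2 - k1) * r'" using k1 k2 by (simp add: algebra_simps)
  fix x assume "x \<in> arith_prog b r"
  then obtain i :: int where "x = b + of_int i * r" by (auto simp: mem_arith_prog)
  then have "x = b' + of_int (k1 + (i - j) * (k2 - k1)) * r'"
    using k1 r by (simp add: algebra_simps)
  then show "x \<in> arith_prog b' r'" unfolding mem_arith_prog by blast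
qed

lemma midpoint_notin_arith_prog:
  assumes "r \<noteq> 0"
  shows "b + r / 2 \<notin> arith_prog b r"
proof
  assume "b + r / 2 \<in> arith_prog b r"
  then obtain k :: int where "b + r / 2 = b + of_int k * r" by (auto simp: mem_arith_prog)
  then have "of_int (2 * k) = (1::real)" using assms by (simp add: field_simps)
  then have "2 * k = 1" by linarith
  then show False by presburger
qed

definition vertical_slice :: "real \<Rightarrow> (real \<times> real) set \<Rightarrow> real set" where
  "vertical_slice \<theta> G = {y. (\<theta>, y) \<in> G}"

lemma vertical_slice_helix:
  assumes \<theta>: "0 \<le> \<theta>" "\<theta> < 1" and c: "c \<noteq> 0"
  shows "vertical_slice \<theta> (range (helix x0 y0 c d)) = arith_prog (y0 + d * (\<theta> - x0) / c) (d / c)"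
proof -
  have "(\<theta>, y) \<in> range (helix x0 y0 c d) \<longleftrightarrow> (\<exists>k::int. y = y0 + d * (\<theta> - x0) / c + of_int k * (d / c))"
    for y
  proof
    assume "(\<theta>, y) \<in> range (helix x0 y0 c d)"
    then obtain s where s: "frac (x0 + c * s) = \<theta>" "y = y0 + d * s"
      by (auto simp: helix_def)
    then obtain k :: int where "x0 + c * s - \<theta> = of_int k"
      using frac_eq_iff_diff_Ints[OF \<theta>] Ints_cases by metis
    then have s_eq: "s = (\<theta> - x0 + of_int k) / c" using c by (simp add: field_simps)
    have "y = y0 + d * (\<theta> - x0) / c + of_int k * (d / c)"
      using s(2)[unfolded s_eq] c by (simp add: field_simps)
    then show "\<exists>k::int. y = y0 + d * (\<theta> - x0) / c + of_int k * (d / c)" by blast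
  next
    assume "\<exists>k::int. y = y0 + d * (\<theta> - x0) / c + of_int k * (d / c)"
    then obtain k :: int where k: "y = y0 + d * (\<theta> - x0) / c + of_int k * (d / c)" by blast
    define s where "s = (\<theta> - x0 + of_int k) / c"
    have "x0 + c * s - \<theta> = of_int k" using c by (simp add: s_def field_simps)
    then have "helix x0 y0 c d s = (\<theta>, y)"
      using frac_eq_iff_diff_Ints[OF \<theta>] k c by (simp add: helix_def s_def field_simps)
    then show "(\<theta>, y) \<in> range (helix x0 y0 c d)" by (metis rangeI)
  qed
  then show ?thesis by (auto simp: vertical_slice_def mem_arith_prog)
qed

lemma vertical_slice_cyl_geodesic_cases:
  assumes "cyl_geodesic G" and \<theta>: "0 \<le> \<theta>" "\<theta> < 1"
  obtains "vertical_slice \<theta> G = {}" | "vertical_slice \<theta> G = UNIV"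
    | a r where "vertical_slice \<theta> G = arith_prog a r"
proof -
  obtain x0 y0 c d where cd: "c\<^sup>2 + d\<^sup>2 = 1" and G: "G = range (helix x0 y0 c d)"
    using assms(1) unfolding cyl_geodesic_iff_helix by blast
  show ?thesis
  proof (cases "c = 0")
    case True
    then have "d \<noteq> 0" using cd by auto
    have inv: "y = y0 + d * ((y - y0) / d)" for y using \<open>d \<noteq> 0\<close> by simp
    have "G = {frac x0} \<times> UNIV" using \<open>c = 0\<close> by (auto simp: G helix_def image_iff) (metis inv)
    then show ?thesis using that(1,2) by (cases "frac x0 = \<theta>") (auto simp: vertical_slice_def)
  next
    case False
    then show ?thesis using that(3) vertical_slice_helix[OF \<theta> False] G by blast
  qed
qed

lemma cyl_geodesic_with_vertical_slice:
  assumes "0 \<le> \<theta>" "\<theta> < 1"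
  shows "\<exists>G. cyl_geodesic G \<and> vertical_slice \<theta> G = arith_prog a r"
proof -
  define c where "c = 1 / sqrt (1 + r\<^sup>2)"
  have pos: "0 < 1 + r\<^sup>2" by (simp add: add_pos_nonneg)
  then have c: "c \<noteq> 0" by (simp add: c_def)
  have "c\<^sup>2 + (r * c)\<^sup>2 = 1"
    using pos by (simp add: c_def field_simps)
  then have "cyl_geodesic (range (helix \<theta> a c (r * c)))" unfolding cyl_geodesic_iff_helix by blast
  moreover have "vertical_slice \<theta> (range (helix \<theta> a c (r * c))) = arith_prog a r"
    using vertical_slice_helix[OF assms c] c by simp
  ultimately show ?thesis by blast
qed

section \<open>Maps preserving arithmetic progressions\<close>

definition preserves_arith_progs :: "(real \<Rightarrow> real) \<Rightarrow> bool" where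
  "preserves_arith_progs g \<longleftrightarrow>
     (\<forall>b r. r \<noteq> 0 \<longrightarrow> (\<exists>b' r'. r' \<noteq> 0 \<and> g ` arith_prog b r = arith_prog b' r'))"

lemma preserves_arith_progs_consecutive:
  assumes inj: "inj g" and pres: "preserves_arith_progs g"
    and img: "g ` arith_prog 0 a = arith_prog b r"
    and x: "x \<in> arith_prog 0 a" and y: "y \<in> arith_prog 0 a" and "x \<noteq> y"
    and gx: "g x = b + of_int j * r" and gy: "g y = b + of_int (j + 1) * r"
  shows "\<bar>y - x\<bar> = \<bar>a\<bar>"
proof -
  \<comment> \<open>The image of the progression \<open>M\<close> through \<open>x\<close> and \<open>y\<close> contains two consecutive terms of
    \<open>g ` arith_prog 0 a\<close>, hence all of it; so \<open>M\<close> contains \<open>0\<close> and \<open>a\<close>.\<close>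
  define M where "M = arith_prog x (y - x)"
  have "y - x \<noteq> 0" using \<open>x \<noteq> y\<close> by simp
  then obtain b' r' where img_M: "g ` M = arith_prog b' r'"
    using pres unfolding preserves_arith_progs_def M_def by blast
  have "x \<in> M" unfolding M_def mem_arith_prog by (rule exI[of _ 0]) simp
  moreover have "y \<in> M" unfolding M_def mem_arith_prog by (rule exI[of _ 1]) simp
  ultimately have "b + of_int j * r \<in> g ` M" "b + of_int (j + 1) * r \<in> g ` M"
    unfolding gx[symmetric] gy[symmetric] by blast+
  then have "arith_prog b r \<subseteq> arith_prog b' r'"
    unfolding img_M by (rule arith_prog_subset)
  then have "g ` arith_prog 0 a \<subseteq> g ` M" unfolding img img_M .
  then have "arith_prog 0 a \<subseteq> M" using inj by (simp add: inj_image_subset_iff)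
  moreover have "0 \<in> arith_prog 0 a" unfolding mem_arith_prog by (rule exI[of _ 0]) simp
  moreover have "a \<in> arith_prog 0 a" unfolding mem_arith_prog by (rule exI[of _ 1]) simp
  ultimately have "0 \<in> M" "a \<in> M" by blast+
  then obtain k0 k1 :: int where "0 = x + of_int k0 * (y - x)" "a = x + of_int k1 * (y - x)"
    unfolding M_def mem_arith_prog by blast
  then have a: "a = of_int (k1 - k0) * (y - x)" by (simp add: algebra_simps)
  obtain i i' :: int where xi: "x = of_int i * a" and yi: "y = of_int i' * a"
    using x y unfolding mem_arith_prog by auto
  define m where "m = i' - i"
  have m: "y - x = of_int m * a" using xi yi by (simp add: m_def left_diff_distrib)
  have "a \<noteq> 0" using m \<open>x \<noteq> y\<close> by auto
  have "of_int ((k1 - k0) * m) * a = 1 * a" using a unfolding m by (simp add: mult.assoc)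
  then have "of_int ((k1 - k0) * m) = (1::real)" using \<open>a \<noteq> 0\<close> by simp
  then have "(k1 - k0) * m = 1" by linarith
  then have "\<bar>m\<bar> = 1" by (auto simp: zmult_eq_1_iff)
  then show ?thesis by (simp add: m abs_mult flip: of_int_abs)
qed

lemma int_fun_affine_if_unit_steps:
  fixes H :: "int \<Rightarrow> int"
  assumes inj: "inj H" and steps: "\<And>j. \<bar>H (j + 1) - H j\<bar> = 1"
  shows "H j = H 0 + (H 1 - H 0) * j"
proof -
  have same: "H (j + 2) - H (j + 1) = H (j + 1) - H j" for j
  proof (rule ccontr)
    assume "\<not> ?thesis"
    then have "H (j + 2) = H j" using steps[of j] steps[of "j + 1"] by (auto simp: add.assoc abs_if split: if_splits)
    then show False using injD[OF inj, of "j + 2" j] by simp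
  qed
  have const_step: "H (j + 1) - H j = H 1 - H 0" for j
  proof (induction j rule: int_induct[where k = 0])
    case (step1 i) then show ?case using same[of i] by (simp add: add.assoc)
  next
    case (step2 i) then show ?case using same[of "i - 1"] by (simp add: algebra_simps)
  qed simp
  show ?thesis
  proof (induction j rule: int_induct[where k = 0])
    case (step1 i) then show ?case using const_step[of i] by (simp add: algebra_simps)
  next
    case (step2 i) then show ?case using const_step[of "i - 1"] by (simp add: algebra_simps)
  qed simp
qed

lemma preserves_arith_progs_affine_on_multiples:
  assumes inj: "inj g" and pres: "preserves_arith_progs g" and a: "a \<noteq> 0"
  obtains C R where "\<And>k::int. g (of_int k * a) = C + of_int k * R"
proof -
  obtain b r where r: "r \<noteq> 0" and img: "g ` arith_prog 0 a = arith_prog b r"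
    using pres a unfolding preserves_arith_progs_def by blast
  have "\<exists>k::int. g (of_int k * a) = b + of_int j * r" for j :: int
  proof -
    have "b + of_int j * r \<in> g ` arith_prog 0 a" unfolding img mem_arith_prog by blast
    then show ?thesis by (auto simp: mem_arith_prog)
  qed
  then obtain H where H: "\<And>j. g (of_int (H j) * a) = b + of_int j * r" by metis
  have "inj H"
  proof (rule injI)
    fix i j assume "H i = H j"
    then have "b + of_int i * r = b + of_int j * r" using H by metis
    then show "i = j" using r by simp
  qed
  have "\<bar>H (j + 1) - H j\<bar> = 1" for j
  proof -
    have "H j \<noteq> H (j + 1)" using injD[OF \<open>inj H\<close>, of j "j + 1"] by auto
    then have neq: "of_int (H j) * a \<noteq> of_int (H (j + 1)) * a" using a by simp
    have mem: "of_int (H i) * a \<in> arith_prog 0 a" for i by (auto simp: mem_arith_prog)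
    have "\<bar>of_int (H (j + 1)) * a - of_int (H j) * a\<bar> = \<bar>a\<bar>"
      using preserves_arith_progs_consecutive[OF inj pres img mem mem neq H[of j] H[of "j + 1"]] .
    then show ?thesis using a by (simp flip: left_diff_distrib of_int_diff of_int_abs add: abs_mult)
  qed
  then have H_affine: "H j = H 0 + (H 1 - H 0) * j" for j
    using int_fun_affine_if_unit_steps[OF \<open>inj H\<close>] by blast
  define \<sigma> where "\<sigma> = H 1 - H 0"
  have "\<bar>\<sigma>\<bar> = 1" using \<open>\<bar>H (0 + 1) - H 0\<bar> = 1\<close> by (simp add: \<sigma>_def)
  then have "\<sigma> * \<sigma> = 1" by (metis abs_mult_self_eq mult_1)
  have "g (of_int k * a) = (b - of_int (\<sigma> * H 0) * r) + of_int k * (of_int \<sigma> * r)" for k :: int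
  proof -
    define j where "j = \<sigma> * (k - H 0)"
    have "H j = H 0 + (\<sigma> * \<sigma>) * (k - H 0)" using H_affine[of j] by (simp add: j_def \<sigma>_def)
    then have "H j = k" using \<open>\<sigma> * \<sigma> = 1\<close> by simp
    then show ?thesis using H[of j] by (simp add: j_def algebra_simps)
  qed
  then show ?thesis using that by blast
qed

lemma preserves_arith_progs_fixes_Rats:
  assumes "inj g" "preserves_arith_progs g" "g 0 = 0" "g 1 = 1" "x \<in> \<rat>"
  shows "g x = x"
proof -
  obtain n q :: int where x: "x = of_int n / of_int q" and q: "q > 0"
    using \<open>x \<in> \<rat>\<close> by (elim Rats_cases') blast
  define a :: real where "a = 1 / of_int q"
  have "a \<noteq> 0" using q by (simp add: a_def)
  then obtain C R where CR: "\<And>k::int. g (of_int k * a) = C + of_int k * R"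
    using preserves_arith_progs_affine_on_multiples assms(1,2) by blast
  have "C = 0" using CR[of 0] \<open>g 0 = 0\<close> by simp
  have "of_int q * a = 1" using q by (simp add: a_def)
  then have "R = a" using CR[of q] \<open>g 1 = 1\<close> \<open>C = 0\<close> q by (simp add: a_def field_simps)
  then show ?thesis using CR[of n] \<open>C = 0\<close> by (simp add: x a_def)
qed

section \<open>Geodesic-preserving bijections\<close>

lemma vertical_slice_image:
  assumes inj: "inj_on f cyl" and G: "G \<subseteq> cyl" and \<theta>: "0 \<le> \<theta>" "\<theta> < 1"
    and vert: "f ` ({\<theta>} \<times> UNIV) = {\<theta>} \<times> UNIV" and g: "\<And>y. f (\<theta>, y) = (\<theta>, g y)"
  shows "vertical_slice \<theta> (f ` G) = g ` vertical_slice \<theta> G"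
proof (rule set_eqI, rule iffI)
  fix y assume "y \<in> vertical_slice \<theta> (f ` G)"
  then obtain p where p: "f p = (\<theta>, y)" "p \<in> G" by (auto simp: vertical_slice_def)
  have "(\<theta>, y) \<in> f ` ({\<theta>} \<times> UNIV)" using vert by simp
  then obtain y' where y': "f (\<theta>, y') = (\<theta>, y)" by auto
  have "(\<theta>, y') \<in> cyl" "p \<in> cyl" using \<theta> G p by (auto simp: cyl_def)
  then have "p = (\<theta>, y')" using inj p y' by (metis inj_onD)
  then show "y \<in> g ` vertical_slice \<theta> G" using p y' g by (auto simp: vertical_slice_def)
next
  fix y assume "y \<in> g ` vertical_slice \<theta> G"
  then show "y \<in> vertical_slice \<theta> (f ` G)" using g by (auto simp: vertical_slice_def) (metis imageI)
qed

lemma geodesic_preserving_vertical_restriction: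
  assumes gp: "geodesic_preserving f" and \<theta>: "0 \<le> \<theta>" "\<theta> < 1"
    and vert: "f ` ({\<theta>} \<times> UNIV) = {\<theta>} \<times> UNIV" and g: "\<And>y. f (\<theta>, y) = (\<theta>, g y)"
  shows "inj g" "preserves_arith_progs g"
proof -
  have inj_f: "inj_on f cyl" and geo: "\<And>G. cyl_geodesic G \<Longrightarrow> cyl_geodesic (f ` G)"
    using gp unfolding geodesic_preserving_def by (auto intro: bij_betw_imp_inj_on)
  show "inj g"
  proof (rule injI)
    fix x y assume "g x = g y"
    then have "f (\<theta>, x) = f (\<theta>, y)" using g by simp
    then show "x = y" using inj_onD[OF inj_f] \<theta> by (auto simp: cyl_def)
  qed
  show "preserves_arith_progs g"
    unfolding preserves_arith_progs_def
  proof (intro allI impI)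
    fix b r :: real assume r: "r \<noteq> 0"
    obtain G where G: "cyl_geodesic G" "vertical_slice \<theta> G = arith_prog b r"
      using cyl_geodesic_with_vertical_slice[OF \<theta>] by blast
    have "G \<subseteq> cyl" using G(1) unfolding cyl_geodesic_def loc_isom_immersion_def by auto
    then have slice: "vertical_slice \<theta> (f ` G) = g ` arith_prog b r"
      using vertical_slice_image[OF inj_f _ \<theta> vert g] G(2) by simp
    have b: "b \<in> arith_prog b r" unfolding mem_arith_prog by (rule exI[of _ 0]) simp
    have br: "b + r \<in> arith_prog b r" unfolding mem_arith_prog by (rule exI[of _ 1]) simp
    from geo[OF G(1)] \<theta> show "\<exists>b' r'. r' \<noteq> 0 \<and> g ` arith_prog b r = arith_prog b' r'"
    proof (cases rule: vertical_slice_cyl_geodesic_cases)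
      case 1 then show ?thesis using slice b by auto
    next
      case 2
      then have "g (b + r / 2) \<in> g ` arith_prog b r" using slice by simp
      then show ?thesis using midpoint_notin_arith_prog[OF r] \<open>inj g\<close> by (auto dest: injD)
    next
      case (3 a' r')
      show ?thesis
      proof (cases "r' = 0")
        case True
        then have "g ` arith_prog b r = arith_prog a' 0" using 3 slice by simp
        then have "g b \<in> arith_prog a' 0" "g (b + r) \<in> arith_prog a' 0" using b br by blast+
        then have "g b = g (b + r)" by (simp add: mem_arith_prog)
        then show ?thesis using \<open>inj g\<close> r by (auto dest: injD)
      qed (use 3 slice in auto)
    qed
  qed
qed

theorem lemma4p4:
  fixes f :: "real \<times> real \<Rightarrow> real \<times> real" and \<theta>0 :: real
  assumes "0 \<le> \<theta>0" and "\<theta>0 < 1"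
    and "geodesic_preserving f"
    and "f ` ({\<theta>0} \<times> UNIV) = {\<theta>0} \<times> UNIV"
    and "f (\<theta>0, 0) = (\<theta>0, 0)"
    and "f (\<theta>0, 1) = (\<theta>0, 1)"
  shows "\<forall>(n::int) (m::nat). f (\<theta>0, real_of_int n / 2 ^ m) = (\<theta>0, real_of_int n / 2 ^ m)"
proof (intro allI)
  fix n :: int and m :: nat
  define g where "g y = snd (f (\<theta>0, y))" for y
  have g: "f (\<theta>0, y) = (\<theta>0, g y)" for y
    using assms(4) by (force simp: g_def prod_eq_iff)
  have "inj g" "preserves_arith_progs g"
    using geodesic_preserving_vertical_restriction[OF assms(3,1,2,4) g] by blast+
  moreover have "g 0 = 0" "g 1 = 1" using assms(5,6) by (simp_all add: g_def)
  moreover have "real_of_int n / 2 ^ m \<in> \<rat>" by (intro Rats_divide Rats_of_int Rats_power) simp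
  ultimately have "g (real_of_int n / 2 ^ m) = real_of_int n / 2 ^ m"
    by (rule preserves_arith_progs_fixes_Rats)
  then show "f (\<theta>0, real_of_int n / 2 ^ m) = (\<theta>0, real_of_int n / 2 ^ m)" by (simp add: g)
qed

end
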